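(* Let $\lambda_C$, $\mathrm{VFS}$, $\mathrm{CPS}$, the VFS-translation ($V^{\circ}$, $(M;x.N)$, $M^{\bullet}$), the CPS-translation ($V^{\dagger}$, $(M:K)$, $M^{\star}$, $\overline{M}$) and the negative translation ($V^{\sim}$, $M^{\wr}$, $M^{-}$) be as described in the context. Then: (1) for all values $V$ of $\lambda_C$, $(V^{\circ})^{\sim}=V^{\dagger}$; (2) for all terms $M$ of $\lambda_C$ and all terms $N$ of $\mathrm{VFS}$, $((M;x.N))^{\wr}=(M:\lambda x.N^{\wr})$; (3) for all terms $M$ of $\lambda_C$, $(M^{\bullet})^{\wr}=M^{\star}$; (4) for all terms $M$ of $\lambda_C$, $(M^{\bullet})^{-}=\overline{M}$. All equalities are syntactic, up to $\alpha$-conversion.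
   Context: Terms are considered up to $\alpha$-conversion. $\lambda_C$: terms $M,N,P,Q::= V\mid MN\mid \mathsf{let}\,x:=M\,\mathsf{in}\,N$ (binding $x$ in $N$), values $V,W::=x\mid\lambda x.M$. $\mathrm{VFS}$: terms $M,N::=\uparrow V\mid \mathsf{C}_v(V,c)$; values $V,W::=x\mid\lambda x.M$; formal contexts $c::= x.M\mid (W,x.M)$ ($x$ bound in $M$). $\mathrm{CPS}$ (a syntax of $\lambda$-terms with a fixed distinguished covariable $k$): commands $M,N::= kV\mid KV\mid VWK$; continuations $K::=\lambda x.M$; values $V,W::=\lambda x.P\mid x$; terms $P::=\lambda k.M$. (Application associates to the left, so $VWK=(VW)K$.) VFS-translation: $x^{\circ}=x$; $(\lambda x.M)^{\circ}=\lambda x.M^{\bullet}$; $M^{\bullet}=(M;x.\uparrow x)$; $(V;x.N)=\mathsf{C}_v(V^{\circ},x.N)$; $(PQ;x.N)=(P;m.(mQ;x.N))$ if $P$ is not a value; $(VQ;x.N)=(Q;n.(Vn;x.N))$ if $Q$ is not a value; $(VW;x.N)=\mathsf{C}_v(V^{\circ},(W^{\circ},x.N))$; $(\mathsf{let}\,y:=M\,\mathsf{in}\,P;x.N)=(M;y.(P;x.N))$. CPS-translation from $\lambda_C$ to $\mathrm{CPS}$: $x^{\dagger}=x$; $(\lambda x.M)^{\dagger}=\lambda x.\overline{M}$; $\overline{M}=\lambda k.M^{\star}$; $M^{\star}=(M:\lambda x.kx)$; for a continuation $K$: $(V:K)=KV^{\dagger}$; $(PQ:K)=(P:\lambda m.(mQ:K))$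 if $P$ is not a value; $(VQ:K)=(Q:\lambda n.(Vn:K))$ if $Q$ is not a value; $(VW:K)=V^{\dagger}W^{\dagger}K$; $(\mathsf{let}\,y:=M\,\mathsf{in}\,P:K)=(M:\lambda y.(P:K))$. Negative translation from $\mathrm{VFS}$ to $\mathrm{CPS}$: $x^{\sim}=x$; $(\lambda x.M)^{\sim}=\lambda x.M^{-}$; $M^{-}=\lambda k.M^{\wr}$; $(\uparrow V)^{\wr}=kV^{\sim}$; $\mathsf{C}_v(V,x.M)^{\wr}=(\lambda x.M^{\wr})V^{\sim}$; $\mathsf{C}_v(V,(W,x.M))^{\wr}=V^{\sim}W^{\sim}(\lambda x.M^{\wr})$. *)

theory Defs
  imports Main
begin

text \<open>All three calculi are represented with de Bruijn indices for the (value)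
variables, so that syntactic equality of representations is exactly equality
up to alpha-conversion.  In CPS the distinguished covariable k is not an
ordinary variable: kV always refers to the innermost enclosing lambda k.\<close>

datatype lc_val = LVar nat | LLam lc_tm
     and lc_tm = LV lc_val | LApp lc_tm lc_tm | LLet lc_tm lc_tm
       (* LLet M P = let x := M in P, x bound (index 0) in P *)

datatype vfs_val = VVar nat | VLam vfs_tm
     and vfs_tm = VRet vfs_val | VC vfs_val vfs_ctx   (* up V,  C_v(V,c) *)
     and vfs_ctx = FAbs vfs_tm | FPair vfs_val vfs_tm
       (* FAbs M = x.M ;  FPair W M = (W, x.M), x bound in M *)

datatype cps_cmd = KRet cps_val | CApp cps_cont cps_val | VApp cps_val cps_val cps_cont
       (* k V,  K V,  V W K *)
     and cps_cont = Cont cps_cmd               (* lambda x. M *)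
     and cps_val = CVar nat | CLam cps_tm
     and cps_tm = KLam cps_cmd                 (* lambda k. M *)

fun lift_lv :: "nat \<Rightarrow> lc_val \<Rightarrow> lc_val"
and lift_lt :: "nat \<Rightarrow> lc_tm \<Rightarrow> lc_tm" where
  "lift_lv k (LVar i) = LVar (if i < k then i else Suc i)"
| "lift_lv k (LLam M) = LLam (lift_lt (Suc k) M)"
| "lift_lt k (LV V) = LV (lift_lv k V)"
| "lift_lt k (LApp M N) = LApp (lift_lt k M) (lift_lt k N)"
| "lift_lt k (LLet M N) = LLet (lift_lt k M) (lift_lt (Suc k) N)"

fun lift_vv :: "nat \<Rightarrow> vfs_val \<Rightarrow> vfs_val"
and lift_vt :: "nat \<Rightarrow> vfs_tm \<Rightarrow> vfs_tm"
and lift_vc :: "nat \<Rightarrow> vfs_ctx \<Rightarrow> vfs_ctx" where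
  "lift_vv k (VVar i) = VVar (if i < k then i else Suc i)"
| "lift_vv k (VLam M) = VLam (lift_vt (Suc k) M)"
| "lift_vt k (VRet V) = VRet (lift_vv k V)"
| "lift_vt k (VC V c) = VC (lift_vv k V) (lift_vc k c)"
| "lift_vc k (FAbs M) = FAbs (lift_vt (Suc k) M)"
| "lift_vc k (FPair W M) = FPair (lift_vv k W) (lift_vt (Suc k) M)"

fun lift_cmd :: "nat \<Rightarrow> cps_cmd \<Rightarrow> cps_cmd"
and lift_cont :: "nat \<Rightarrow> cps_cont \<Rightarrow> cps_cont"
and lift_cv :: "nat \<Rightarrow> cps_val \<Rightarrow> cps_val"
and lift_ct :: "nat \<Rightarrow> cps_tm \<Rightarrow> cps_tm" where
  "lift_cmd k (KRet V) = KRet (lift_cv k V)"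
| "lift_cmd k (CApp K V) = CApp (lift_cont k K) (lift_cv k V)"
| "lift_cmd k (VApp V W K) = VApp (lift_cv k V) (lift_cv k W) (lift_cont k K)"
| "lift_cont k (Cont M) = Cont (lift_cmd (Suc k) M)"
| "lift_cv k (CVar i) = CVar (if i < k then i else Suc i)"
| "lift_cv k (CLam P) = CLam (lift_ct (Suc k) P)"
| "lift_ct k (KLam M) = KLam (lift_cmd k M)"

fun sz_v :: "lc_val \<Rightarrow> nat" and sz_t :: "lc_tm \<Rightarrow> nat" where
  "sz_v (LVar i) = 1"
| "sz_v (LLam M) = Suc (sz_t M)"
| "sz_t (LV V) = Suc (sz_v V)"
| "sz_t (LApp M N) = Suc (sz_t M + sz_t N)"
| "sz_t (LLet M N) = Suc (sz_t M + sz_t N)"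

lemma sz_lift: "sz_v (lift_lv k V) = sz_v V" "sz_t (lift_lt k M) = sz_t M"
  by (induct V and M arbitrary: k and k rule: sz_v_sz_t.induct) auto

lemma sz_pos: "sz_v V \<ge> 1" "sz_t M \<ge> 2"
  by (induct V and M rule: sz_v_sz_t.induct) auto

lemma sz_sum_gt: "Suc 0 < sz_t M + sz_t N"
  using sz_pos(2)[of M] by simp

section \<open>VFS-translation:  V\<degree> = vfs_of_val V,  (M; x.N) = vfs_seq M N\<close>

text \<open>In vfs_seq M N, N lives in the context extended by the bound x (index 0).\<close>

function (sequential) vfs_of_val :: "lc_val \<Rightarrow> vfs_val"
and vfs_seq :: "lc_tm \<Rightarrow> vfs_tm \<Rightarrow> vfs_tm" where
  "vfs_of_val (LVar x) = VVar x"
| "vfs_of_val (LLam M) = VLam (vfs_seq M (VRet (VVar 0)))"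
| "vfs_seq (LV V) N = VC (vfs_of_val V) (FAbs N)"
| "vfs_seq (LApp (LV V) (LV W)) N = VC (vfs_of_val V) (FPair (vfs_of_val W) N)"
| "vfs_seq (LApp (LV V) Q) N =
     vfs_seq Q (vfs_seq (LApp (LV (lift_lv 0 V)) (LV (LVar 0))) (lift_vt 1 N))"
| "vfs_seq (LApp P Q) N =
     vfs_seq P (vfs_seq (LApp (LV (LVar 0)) (lift_lt 0 Q)) (lift_vt 1 N))"
| "vfs_seq (LLet M P) N = vfs_seq M (vfs_seq P (lift_vt 1 N))"
  by pat_completeness auto
termination
  by (relation "measure (case_sum sz_v (\<lambda>(M, N). sz_t M))")
     (auto simp: sz_lift sz_sum_gt)

definition vfs_bullet :: "lc_tm \<Rightarrow> vfs_tm" where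
  "vfs_bullet M = vfs_seq M (VRet (VVar 0))"

section \<open>CPS-translation:  V\<dagger> = cps_of_val V,  (M : K) = cps_colon M K\<close>

function (sequential) cps_of_val :: "lc_val \<Rightarrow> cps_val"
and cps_colon :: "lc_tm \<Rightarrow> cps_cont \<Rightarrow> cps_cmd" where
  "cps_of_val (LVar x) = CVar x"
| "cps_of_val (LLam M) = CLam (KLam (cps_colon M (Cont (KRet (CVar 0)))))"
| "cps_colon (LV V) K = CApp K (cps_of_val V)"
| "cps_colon (LApp (LV V) (LV W)) K = VApp (cps_of_val V) (cps_of_val W) K"
| "cps_colon (LApp (LV V) Q) K =
     cps_colon Q (Cont (cps_colon (LApp (LV (lift_lv 0 V)) (LV (LVar 0))) (lift_cont 0 K)))"
| "cps_colon (LApp P Q) K =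
     cps_colon P (Cont (cps_colon (LApp (LV (LVar 0)) (lift_lt 0 Q)) (lift_cont 0 K)))"
| "cps_colon (LLet M P) K = cps_colon M (Cont (cps_colon P (lift_cont 0 K)))"
  by pat_completeness auto
termination
  by (relation "measure (case_sum sz_v (\<lambda>(M, N). sz_t M))")
     (auto simp: sz_lift sz_sum_gt)

definition cps_star :: "lc_tm \<Rightarrow> cps_cmd" where
  "cps_star M = cps_colon M (Cont (KRet (CVar 0)))"

definition cps_bar :: "lc_tm \<Rightarrow> cps_tm" where
  "cps_bar M = KLam (cps_star M)"

section \<open>Negative translation: V~ = neg_val V, M\<wr> = neg_wr M, M^- = neg_minus M\<close>

fun neg_val :: "vfs_val \<Rightarrow> cps_val" and neg_wr :: "vfs_tm \<Rightarrow> cps_cmd" where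
  "neg_val (VVar x) = CVar x"
| "neg_val (VLam M) = CLam (KLam (neg_wr M))"
| "neg_wr (VRet V) = KRet (neg_val V)"
| "neg_wr (VC V (FAbs M)) = CApp (Cont (neg_wr M)) (neg_val V)"
| "neg_wr (VC V (FPair W M)) = VApp (neg_val V) (neg_val W) (Cont (neg_wr M))"

definition neg_minus :: "vfs_tm \<Rightarrow> cps_tm" where
  "neg_minus M = KLam (neg_wr M)"

end

theory Submission
  imports Defs
begin

text \<open>The VFS-translation and the CPS-translation recurse on the same shapes of
\<open>\<lambda>\<^sub>C\<close>-terms, and the negative translation sends every clause of the former to
the matching clause of the latter: \<open>C\<^sub>v(V, x.N)\<close> becomes \<open>(\<lambda>x.N\<^sup>\<wr>) V\<^sup>\<sim>\<close> and
\<open>C\<^sub>v(V, (W, x.N))\<close> becomes \<open>V\<^sup>\<sim> W\<^sup>\<sim> (\<lambda>x.N\<^sup>\<wr>)\<close>. So (1) and (2) follow by one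
simultaneous induction along the recursion of the translations, once the
negative translation is known to commute with shifting of de Bruijn indices;
(3) and (4) are the instances \<open>N = \<up>x\<close>.\<close>

lemma neg_val_lift_vv: "neg_val (lift_vv k V) = lift_cv k (neg_val V)"
  and neg_wr_lift_vt: "neg_wr (lift_vt k M) = lift_cmd k (neg_wr M)"
  by (induct V and M arbitrary: k and k rule: neg_val_neg_wr.induct) auto

text \<open>The binder of a CPS continuation shifts like the bound variable of a VFS
formal context: \<open>lift_cont 0 (Cont (neg_wr N)) = Cont (neg_wr (lift_vt 1 N))\<close>.\<close>

lemma neg_val_vfs_of_val: "neg_val (vfs_of_val V) = cps_of_val V"
  and neg_wr_vfs_seq: "neg_wr (vfs_seq M N) = cps_colon M (Cont (neg_wr N))"
  by (induct V and M N rule: vfs_of_val_vfs_seq.induct) (auto simp: neg_wr_lift_vt)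

lemma neg_wr_vfs_bullet: "neg_wr (vfs_bullet M) = cps_star M"
  by (simp add: vfs_bullet_def cps_star_def neg_wr_vfs_seq)

lemma neg_minus_vfs_bullet: "neg_minus (vfs_bullet M) = cps_bar M"
  by (simp add: neg_minus_def cps_bar_def neg_wr_vfs_bullet)

theorem theorem2:
  shows "(\<forall>V. neg_val (vfs_of_val V) = cps_of_val V)
       \<and> (\<forall>M N. neg_wr (vfs_seq M N) = cps_colon M (Cont (neg_wr N)))
       \<and> (\<forall>M. neg_wr (vfs_bullet M) = cps_star M)
       \<and> (\<forall>M. neg_minus (vfs_bullet M) = cps_bar M)"
  using neg_val_vfs_of_val neg_wr_vfs_seq neg_wr_vfs_bullet neg_minus_vfs_bullet
  by blast

end
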